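(* Assume the $\mathrm{CH}$. Then the forcing notion $\mathbb{P}$ satisfies the $\aleph_2$-chain condition.
   Context: Fix a well-ordering $\lhd$ of $H(\omega_2)$. "$M \prec H(\omega_2)$" means $\langle M,\in,\lhd\cap M^2\rangle$ is an elementary substructure of $\langle H(\omega_2),\in,\lhd\rangle$. Let $\mathcal{S} = \{M \in [H(\omega_2)]^{\aleph_0} : M \prec H(\omega_2)\}$. For $M,N \in \mathcal{S}$ write $M \cong N$ if $\langle M,\in\rangle \cong \langle N,\in\rangle$, and let $\varphi_{M,N}: M \to N$ be the unique isomorphism. Put $\delta_M = M\cap\omega_1$; for $p \subseteq \mathcal{S}$, $dom(p) = \{\delta_M : M \in p\}$ and $p(\delta) = \{M \in p : \delta_M = \delta\}$. The forcing $\mathbb{P}^M_{\in}$ consists of finite $p \subseteq \mathcal{S}$ such that (a) if $M,N \in p$ and $\delta_M = \delta_N$ then $M \cong N$; (b) if $M \in p$, $\delta \in dom(p)$ and $\delta_M < \delta$, then there is $N \in p(\delta)$ with $M \in N$; ordered by reverse inclusion. The forcing $\mathbb{P}$ consists of pairs $p = \langle \mathcal{M}_p, f_p\rangle$ with $\mathcal{M}_p \in \mathbb{P}^M_{\in}$, $f_p$ a finite partial function from $\omega_2$ to $2$, and such that whenever $M,N \in \mathcal{M}_p$ with $\delta_M = \delta_N$ and $\alpha \in dom(f_p) \cap M$, then $\varphi_{M,N}(\alpha) \in dom(f_p)$ and $f_p(\varphi_{M,N}(\alpha)) = f_p(\alpha)$. Order: $p \le q$ iff $\mathcal{M}_q \subseteq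 \mathcal{M}_p$ and $f_q \subseteq f_p$. *)

theory Defs
  imports Main "HOL-Library.Countable_Set"
begin

definition at_most_aleph1 :: "'a set \<Rightarrow> bool" where
  "at_most_aleph1 A \<longleftrightarrow> (card_of A, cardSuc natLeq) \<in> ordLeq"

definition CH :: bool where
  "CH \<longleftrightarrow> (card_of (UNIV :: nat set set), cardSuc natLeq) \<in> ordIso"

text \<open>The structure (UNIV, E) where E x y means "x is an element of y".
  A membership structure is isomorphic to (H(omega_2), \<in>) iff it is well-founded,
  extensional, every element has at most aleph_1 members, and every subset of size
  at most aleph_1 is the extension of some element (Mostowski collapse).\<close>

definition ext :: "('h \<Rightarrow> 'h \<Rightarrow> bool) \<Rightarrow> 'h \<Rightarrow> 'h set" where
  "ext E x = {y. E y x}"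

definition is_H_omega2 :: "('h \<Rightarrow> 'h \<Rightarrow> bool) \<Rightarrow> bool" where
  "is_H_omega2 E \<longleftrightarrow>
     wfP E
   \<and> (\<forall>x y. ext E x = ext E y \<longrightarrow> x = y)
   \<and> (\<forall>x. at_most_aleph1 (ext E x))
   \<and> (\<forall>S. at_most_aleph1 S \<longrightarrow> (\<exists>x. ext E x = S))"

definition is_Ord :: "('h \<Rightarrow> 'h \<Rightarrow> bool) \<Rightarrow> 'h \<Rightarrow> bool" where
  "is_Ord E x \<longleftrightarrow>
     (\<forall>y\<in>ext E x. ext E y \<subseteq> ext E x)
   \<and> (\<forall>y\<in>ext E x. \<forall>z\<in>ext E x. E y z \<or> y = z \<or> E z y)"

definition omega2 :: "('h \<Rightarrow> 'h \<Rightarrow> bool) \<Rightarrow> 'h set" where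
  "omega2 E = {x. is_Ord E x}"

definition omega1 :: "('h \<Rightarrow> 'h \<Rightarrow> bool) \<Rightarrow> 'h set" where
  "omega1 E = {x. is_Ord E x \<and> countable (ext E x)}"

datatype fm =
    FMem nat nat
  | FLt nat nat
  | FEq nat nat
  | FNeg fm
  | FConj fm fm
  | FEx nat fm

fun sat :: "'h set \<Rightarrow> ('h \<Rightarrow> 'h \<Rightarrow> bool) \<Rightarrow> ('h \<times> 'h) set \<Rightarrow> fm \<Rightarrow> (nat \<Rightarrow> 'h) \<Rightarrow> bool" where
  "sat D E W (FMem i j) s = E (s i) (s j)"
| "sat D E W (FLt i j) s = ((s i, s j) \<in> W)"
| "sat D E W (FEq i j) s = (s i = s j)"
| "sat D E W (FNeg \<phi>) s = (\<not> sat D E W \<phi> s)"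
| "sat D E W (FConj \<phi> \<psi>) s = (sat D E W \<phi> s \<and> sat D E W \<psi> s)"
| "sat D E W (FEx i \<phi>) s = (\<exists>a\<in>D. sat D E W \<phi> (s(i := a)))"

definition elem_sub :: "('h \<Rightarrow> 'h \<Rightarrow> bool) \<Rightarrow> ('h \<times> 'h) set \<Rightarrow> 'h set \<Rightarrow> bool" where
  "elem_sub E W M \<longleftrightarrow>
     (\<forall>\<phi> s. (\<forall>i. s i \<in> M) \<longrightarrow> (sat M E W \<phi> s \<longleftrightarrow> sat UNIV E W \<phi> s))"

definition SS :: "('h \<Rightarrow> 'h \<Rightarrow> bool) \<Rightarrow> ('h \<times> 'h) set \<Rightarrow> 'h set set" where
  "SS E W = {M. countable M \<and> infinite M \<and> elem_sub E W M}"

definition is_iso :: "('h \<Rightarrow> 'h \<Rightarrow> bool) \<Rightarrow> 'h set \<Rightarrow> 'h set \<Rightarrow> ('h \<Rightarrow> 'h) \<Rightarrow> bool" where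
  "is_iso E M N \<phi> \<longleftrightarrow> bij_betw \<phi> M N \<and> (\<forall>x\<in>M. \<forall>y\<in>M. E x y \<longleftrightarrow> E (\<phi> x) (\<phi> y))"

definition isomorphic :: "('h \<Rightarrow> 'h \<Rightarrow> bool) \<Rightarrow> 'h set \<Rightarrow> 'h set \<Rightarrow> bool" where
  "isomorphic E M N \<longleftrightarrow> (\<exists>\<phi>. is_iso E M N \<phi>)"

text \<open>The (unique) isomorphism phi_{M,N}, made unique outside M by the value undefined.\<close>

definition phi :: "('h \<Rightarrow> 'h \<Rightarrow> bool) \<Rightarrow> 'h set \<Rightarrow> 'h set \<Rightarrow> 'h \<Rightarrow> 'h" where
  "phi E M N = (THE \<phi>. is_iso E M N \<phi> \<and> (\<forall>x. x \<notin> M \<longrightarrow> \<phi> x = undefined))"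

text \<open>delta_M = M \<inter> omega_1, a countable ordinal; ordinals are compared by proper inclusion.\<close>

definition delta :: "('h \<Rightarrow> 'h \<Rightarrow> bool) \<Rightarrow> 'h set \<Rightarrow> 'h set" where
  "delta E M = M \<inter> omega1 E"

definition set_in :: "('h \<Rightarrow> 'h \<Rightarrow> bool) \<Rightarrow> 'h set \<Rightarrow> 'h set \<Rightarrow> bool" where
  "set_in E M N \<longleftrightarrow> (\<exists>x\<in>N. ext E x = M)"

definition P_Min :: "('h \<Rightarrow> 'h \<Rightarrow> bool) \<Rightarrow> ('h \<times> 'h) set \<Rightarrow> 'h set set set" where
  "P_Min E W = {p. finite p \<and> p \<subseteq> SS E W
     \<and> (\<forall>M\<in>p. \<forall>N\<in>p. delta E M = delta E N \<longrightarrow> isomorphic E M N)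
     \<and> (\<forall>M\<in>p. \<forall>N'\<in>p. delta E M \<subset> delta E N' \<longrightarrow>
          (\<exists>N\<in>p. delta E N = delta E N' \<and> set_in E M N))}"

type_synonym 'h cond = "'h set set \<times> ('h \<rightharpoonup> bool)"

definition PP :: "('h \<Rightarrow> 'h \<Rightarrow> bool) \<Rightarrow> ('h \<times> 'h) set \<Rightarrow> 'h cond set" where
  "PP E W = {(Mp, f). Mp \<in> P_Min E W
     \<and> finite (dom f) \<and> dom f \<subseteq> omega2 E
     \<and> (\<forall>M\<in>Mp. \<forall>N\<in>Mp. delta E M = delta E N \<longrightarrow>
          (\<forall>\<alpha>\<in>dom f \<inter> M. phi E M N \<alpha> \<in> dom f \<and> f (phi E M N \<alpha>) = f \<alpha>))}"

definition PP_le :: "'h cond \<Rightarrow> 'h cond \<Rightarrow> bool" where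
  "PP_le p q \<longleftrightarrow> fst q \<subseteq> fst p \<and> snd q \<subseteq>\<^sub>m snd p"

definition compatible :: "'c set \<Rightarrow> ('c \<Rightarrow> 'c \<Rightarrow> bool) \<Rightarrow> 'c \<Rightarrow> 'c \<Rightarrow> bool" where
  "compatible P le p q \<longleftrightarrow> (\<exists>r\<in>P. le r p \<and> le r q)"

definition antichain :: "'c set \<Rightarrow> ('c \<Rightarrow> 'c \<Rightarrow> bool) \<Rightarrow> 'c set \<Rightarrow> bool" where
  "antichain P le A \<longleftrightarrow> A \<subseteq> P \<and> (\<forall>p\<in>A. \<forall>q\<in>A. p \<noteq> q \<longrightarrow> \<not> compatible P le p q)"

text \<open>aleph_2-c.c.: every antichain has size < aleph_2, i.e. at most aleph_1.\<close>

definition aleph2_cc :: "'c set \<Rightarrow> ('c \<Rightarrow> 'c \<Rightarrow> bool) \<Rightarrow> bool" where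
  "aleph2_cc P le \<longleftrightarrow> (\<forall>A. antichain P le A \<longrightarrow> at_most_aleph1 A)"

end

theory Submission
  imports Defs "HOL-Library.Countable_Set_Type"
begin

unbundle cardinal_syntax

text \<open>Let A be an antichain. A condition p carries a countable structure (its models, its
  colouring and the membership relation between their elements), and its type over a countable
  set R records this structure up to isomorphism together with its trace on R and on omega1.
  Under CH there are only aleph1 types, so a closure argument of length omega1 yields a set Z
  of size aleph1 containing omega1 such that every type over a countable subset of Z that is
  realised in A is realised by a condition supported inside Z.

  If some p in A were not supported inside Z, let R be the part of its support in Z and pick
  q in A of the same type over R supported inside Z. Then q and p are isomorphic over R, and R
  contains both their common support and their parts in omega1; hence the union of q and p is
  a condition extending both, which is impossible for distinct members of an antichain. So
  every member of A is supported inside Z, and by CH there are only aleph1 such conditions.\<close>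

section \<open>Cardinal arithmetic under CH\<close>

abbreviation aleph1 :: "nat set rel" where
  "aleph1 \<equiv> cardSuc natLeq"

lemma Card_order_aleph1: "Card_order aleph1"
  by (simp add: cardSuc_Card_order natLeq_Card_order)

lemma infinite_Field_aleph1: "infinite (Field aleph1)"
  using Cinfinite_cardSuc[OF natLeq_Cinfinite] unfolding cinfinite_def by blast

lemma countable_iff_card_less_aleph1: "countable A \<longleftrightarrow> |A| <o aleph1"
  by (simp add: countable_card_le_natLeq cardSuc_ordLeq_ordLess[OF natLeq_Card_order card_of_Card_order])

lemma countable_imp_card_le_aleph1: "countable A \<Longrightarrow> |A| \<le>o aleph1"
  by (simp add: countable_iff_card_less_aleph1 ordLess_imp_ordLeq)

lemma uncountable_Field_aleph1: "uncountable (Field aleph1)"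
  using card_of_Field_ordIso[OF Card_order_aleph1] not_ordLess_ordIso
  unfolding countable_iff_card_less_aleph1 by blast

lemma card_le_aleph1_Un: "|A| \<le>o aleph1 \<Longrightarrow> |B| \<le>o aleph1 \<Longrightarrow> |A \<union> B| \<le>o aleph1"
  using card_of_Un_ordLeq_infinite_Field[OF infinite_Field_aleph1 _ _ Card_order_aleph1] .

lemma card_le_aleph1_UN:
  "|I| \<le>o aleph1 \<Longrightarrow> (\<And>i. i \<in> I \<Longrightarrow> |A i| \<le>o aleph1) \<Longrightarrow> |\<Union>i\<in>I. A i| \<le>o aleph1"
  using card_of_UNION_ordLeq_infinite_Field[OF infinite_Field_aleph1 Card_order_aleph1] by blast

lemma card_le_aleph1_Times: "|A| \<le>o aleph1 \<Longrightarrow> |B| \<le>o aleph1 \<Longrightarrow> |A \<times> B| \<le>o aleph1"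
  using card_of_Times_ordLeq_infinite_Field[OF infinite_Field_aleph1 _ _ Card_order_aleph1] .

lemma card_le_aleph1_subset: "A \<subseteq> B \<Longrightarrow> |B| \<le>o aleph1 \<Longrightarrow> |A| \<le>o aleph1"
  using card_of_mono1 ordLeq_transitive by blast

lemma card_of_Field_aleph1_le: "|Field aleph1| \<le>o aleph1"
  using card_of_Field_ordIso[OF Card_order_aleph1] ordIso_iff_ordLeq by blast

lemma card_of_countable_subsets_le_continuum:
  assumes "|A| \<le>o |UNIV :: nat set set|"
  shows "|{X. X \<subseteq> A \<and> countable X}| \<le>o |UNIV :: nat set set|"
proof -
  obtain j :: "_ \<Rightarrow> nat set" where j: "inj_on j A"
    using assms card_of_ordLeq[of A "UNIV :: nat set set"] by blast
  \<comment> \<open>T \<noteq> {} is coded by the graph of its enumeration from_nat_into T, shifted to avoid 0\<close>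
  define code :: "nat set set \<Rightarrow> nat set" where
    "code T = (if T = {} then {0} else Suc ` prod_encode ` (SIGMA n:UNIV. from_nat_into T n))" for T
  have "inj_on code {T. countable T}"
  proof (rule inj_onI)
    fix S T :: "nat set set"
    assume S: "S \<in> {T. countable T}" and T: "T \<in> {T. countable T}" and eq: "code S = code T"
    have "S = {} \<longleftrightarrow> T = {}" using eq unfolding code_def by (auto split: if_splits)
    moreover have "S = T" if "S \<noteq> {}" "T \<noteq> {}"
    proof -
      have "(SIGMA n:UNIV. from_nat_into S n) = (SIGMA n:UNIV. from_nat_into T n)"
        using eq that unfolding code_def by (simp add: inj_image_eq_iff inj_prod_encode)
      then have "from_nat_into S = from_nat_into T" by blast
      then show "S = T" using S T that by (metis mem_Collect_eq range_from_nat_into)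
    qed
    ultimately show "S = T" by blast
  qed
  then have "inj_on code (image j ` {X. X \<subseteq> A \<and> countable X})"
    by (rule inj_on_subset) auto
  moreover have "inj_on (image j) {X. X \<subseteq> A \<and> countable X}"
    using inj_on_image_Pow[OF j] by (rule inj_on_subset) blast
  ultimately have "inj_on (code \<circ> image j) {X. X \<subseteq> A \<and> countable X}"
    by (simp add: comp_inj_on)
  then show ?thesis using card_of_ordLeq by blast
qed

lemma CH_card_of_countable_subsets_le_aleph1:
  assumes "CH" and "|A| \<le>o aleph1"
  shows "|{X. X \<subseteq> A \<and> countable X}| \<le>o aleph1"
proof -
  have continuum: "|UNIV :: nat set set| =o aleph1" using \<open>CH\<close> unfolding CH_def .
  then have "|A| \<le>o |UNIV :: nat set set|"
    using assms(2) ordIso_symmetric ordLeq_ordIso_trans by blast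
  then show ?thesis
    using card_of_countable_subsets_le_continuum continuum ordLeq_ordIso_trans by blast
qed

lemma CH_card_of_Pow_countable_le_aleph1:
  assumes "CH"
  shows "|UNIV :: 'a::countable set set| \<le>o aleph1"
  using CH_card_of_countable_subsets_le_aleph1[OF assms, of "UNIV :: 'a set"]
  by (simp add: countable_imp_card_le_aleph1)

lemma aleph1_no_greatest:
  assumes i: "i \<in> Field aleph1"
  obtains i' where "i' \<in> Field aleph1" "i \<in> underS aleph1 i'"
proof -
  have "countable (insert i (underS aleph1 i))"
    using card_of_underS[OF Card_order_aleph1 i] by (simp add: countable_iff_card_less_aleph1[symmetric])
  then have "\<not> Field aleph1 \<subseteq> insert i (underS aleph1 i)"
    using uncountable_Field_aleph1 countable_subset by meson
  then obtain i' where i': "i' \<in> Field aleph1" "i' \<noteq> i" "i' \<notin> underS aleph1 i"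
    by blast
  have "(i, i') \<in> aleph1 \<or> (i', i) \<in> aleph1"
    using wo_rel.TOTALS[OF Card_order_wo_rel[OF Card_order_aleph1]] i i'(1) by blast
  then have "i \<in> underS aleph1 i'"
    using i'(2,3) unfolding underS_def by blast
  with i'(1) show thesis by (rule that)
qed

lemma relChain_aleph1_countable_subset:
  assumes "relChain aleph1 S" and "countable R" and "R \<subseteq> (\<Union>k\<in>Field aleph1. S k)"
  obtains i where "i \<in> Field aleph1" "R \<subseteq> (\<Union>k\<in>underS aleph1 i. S k)"
proof -
  obtain k where k: "k \<in> Field aleph1" "R \<subseteq> S k"
    using cardSuc_UNION_Cinfinite[OF natLeq_Cinfinite assms(1,3)] assms(2)
    by (auto simp: countable_card_le_natLeq)
  obtain i where "i \<in> Field aleph1" "k \<in> underS aleph1 i"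
    using aleph1_no_greatest[OF k(1)] .
  with k(2) show thesis by (intro that) auto
qed

text \<open>Iterate F along aleph1: a countable subset of the union is bounded by some stage, at which
  its image under F is added.\<close>

lemma CH_closure_card_le_aleph1:
  fixes F :: "'a set \<Rightarrow> 'a set"
  assumes "CH" and Z0: "|Z0| \<le>o aleph1" and F: "\<And>R. countable R \<Longrightarrow> |F R| \<le>o aleph1"
  obtains Z where "Z0 \<subseteq> Z" "|Z| \<le>o aleph1" "\<And>R. countable R \<Longrightarrow> R \<subseteq> Z \<Longrightarrow> F R \<subseteq> Z"
proof -
  have wo: "wo_rel aleph1" by (rule Card_order_wo_rel[OF Card_order_aleph1])
  define step where "step S k = Z0 \<union> (\<Union>R\<in>{R. R \<subseteq> (\<Union>k'\<in>underS aleph1 k. S k') \<and> countable R}. F R)"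
    for S :: "nat set \<Rightarrow> 'a set" and k
  have "wo_rel.adm_wo aleph1 step"
    unfolding wo_rel.adm_wo_def[OF wo] step_def by simp
  then obtain S where S: "\<And>k. S k = step S k"
    using wo_rel.worec_fixpoint[OF wo] by metis
  define Z where "Z = (\<Union>k\<in>Field aleph1. S k)"
  have mono: "S k \<subseteq> S k'" if "(k, k') \<in> aleph1" for k k'
  proof -
    have "underS aleph1 k \<subseteq> underS aleph1 k'"
      using wo that unfolding wo_rel_def
      by (intro underS_incr) (auto simp: well_order_on_def linear_order_on_def
          partial_order_on_def preorder_on_def)
    then have "{R. R \<subseteq> (\<Union>k''\<in>underS aleph1 k. S k'') \<and> countable R}
        \<subseteq> {R. R \<subseteq> (\<Union>k''\<in>underS aleph1 k'. S k'') \<and> countable R}"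
      by blast
    then have "step S k \<subseteq> step S k'"
      unfolding step_def by (rule Un_mono[OF order_refl UN_mono[OF _ order_refl]])
    then show ?thesis using S by simp
  qed
  have card_S: "|S k| \<le>o aleph1" for k
  proof (induction k rule: wo_rel.well_order_induct[OF wo])
    case (1 k)
    have "|underS aleph1 k| \<le>o aleph1"
      by (rule card_le_aleph1_subset[OF _ card_of_Field_aleph1_le]) (auto intro: underS_Field)
    then have "|\<Union>k'\<in>underS aleph1 k. S k'| \<le>o aleph1"
      using 1 by (intro card_le_aleph1_UN) (auto simp: underS_def)
    then have "|{R. R \<subseteq> (\<Union>k'\<in>underS aleph1 k. S k') \<and> countable R}| \<le>o aleph1"
      by (rule CH_card_of_countable_subsets_le_aleph1[OF \<open>CH\<close>])
    then have "|\<Union>R\<in>{R. R \<subseteq> (\<Union>k'\<in>underS aleph1 k. S k') \<and> countable R}. F R| \<le>o aleph1"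
      by (rule card_le_aleph1_UN) (simp add: F)
    then have "|step S k| \<le>o aleph1"
      unfolding step_def by (rule card_le_aleph1_Un[OF Z0])
    then show ?case using S[of k] by simp
  qed
  obtain k where "k \<in> Field aleph1"
    using infinite_Field_aleph1 by fastforce
  then have "Z0 \<subseteq> Z" using S[of k] unfolding Z_def step_def by blast
  moreover have "|Z| \<le>o aleph1"
    unfolding Z_def by (rule card_le_aleph1_UN[OF card_of_Field_aleph1_le card_S])
  moreover have "F R \<subseteq> Z" if R: "countable R" "R \<subseteq> Z" for R
  proof -
    have "relChain aleph1 S" unfolding relChain_def using mono by blast
    then obtain i where i: "i \<in> Field aleph1" "R \<subseteq> (\<Union>k\<in>underS aleph1 i. S k)"
      using relChain_aleph1_countable_subset R unfolding Z_def by blast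
    have "F R \<subseteq> step S i" unfolding step_def using R(1) i(2) by blast
    then show ?thesis using S[of i] i(1) unfolding Z_def by blast
  qed
  ultimately show thesis by (rule that)
qed

section \<open>Ordinals and models of H(omega_2)\<close>

lemma is_H_omega2_wfP: "is_H_omega2 E \<Longrightarrow> wfP E"
  unfolding is_H_omega2_def by blast

lemma is_H_omega2_inj_ext: "is_H_omega2 E \<Longrightarrow> inj (ext E)"
  unfolding is_H_omega2_def inj_def by blast

lemma wfP_no_3cycle:
  assumes "wfP E" and "E a b" "E b c"
  shows "\<not> E c a"
proof
  assume "E c a"
  obtain z where "z \<in> {a, b, c}" "\<forall>y. E y z \<longrightarrow> y \<notin> {a, b, c}"
    using assms(1) unfolding wfp_eq_minimal by (metis insertI1)
  then show False using assms(2,3) \<open>E c a\<close> by auto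
qed

lemma is_Ord_mem:
  assumes wf: "wfP E" and x: "is_Ord E x" and "E y x"
  shows "is_Ord E y"
proof -
  have y: "y \<in> ext E x" using \<open>E y x\<close> unfolding ext_def by simp
  have sub: "ext E y \<subseteq> ext E x" using x y unfolding is_Ord_def by blast
  have "ext E z \<subseteq> ext E y" if z: "z \<in> ext E y" for z
  proof
    fix w assume w: "w \<in> ext E z"
    have "w \<in> ext E x" using x sub z w unfolding is_Ord_def by blast
    then have "E w y \<or> w = y \<or> E y w" using x y unfolding is_Ord_def by blast
    moreover have "E z y" "E w z" using z w unfolding ext_def by auto
    ultimately show "w \<in> ext E y"
      using wfp_imp_asymp[OF wf] wfP_no_3cycle[OF wf, of y w z] unfolding ext_def
      by (auto dest: asympD)
  qed
  then show ?thesis using x sub unfolding is_Ord_def by blast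
qed

lemma is_Ord_linear:
  assumes wf: "wfP E" and extensional: "inj (ext E)"
  shows "is_Ord E x \<Longrightarrow> is_Ord E y \<Longrightarrow> E x y \<or> x = y \<or> E y x"
proof (induction x arbitrary: y rule: wfp_induct_rule[OF wf])
  case (1 x)
  note IH_x = 1
  show ?case using IH_x(3)
  proof (induction y rule: wfp_induct_rule[OF wf])
    case (1 y)
    show ?case
    proof (rule ccontr)
      assume incomparable: "\<not> (E x y \<or> x = y \<or> E y x)"
      have "ext E x = ext E y"
      proof (intro set_eqI iffI)
        fix z assume "z \<in> ext E x"
        then have zx: "E z x" unfolding ext_def by simp
        have "E z y \<or> z = y \<or> E y z"
          using IH_x(1)[OF zx is_Ord_mem[OF wf IH_x(2) zx] 1(2)] .
        moreover have "E y z \<Longrightarrow> E y x"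
          using IH_x(2) zx unfolding is_Ord_def ext_def by blast
        ultimately show "z \<in> ext E y" using incomparable zx unfolding ext_def by blast
      next
        fix z assume "z \<in> ext E y"
        then have zy: "E z y" unfolding ext_def by simp
        have "E x z \<or> x = z \<or> E z x"
          using 1(1)[OF zy is_Ord_mem[OF wf 1(2) zy]] .
        moreover have "E x z \<Longrightarrow> E x y"
          using 1(2) zy unfolding is_Ord_def ext_def by blast
        ultimately show "z \<in> ext E x" using incomparable zy unfolding ext_def by blast
      qed
      then show False using incomparable extensional by (auto dest: injD)
    qed
  qed
qed

text \<open>Every countable ordinal has only countably many predecessors, so a subset of omega1
  of size aleph1 would be bounded by no countable ordinal.\<close>

lemma card_omega1_le_aleph1:
  assumes H: "is_H_omega2 E"
  shows "|omega1 E| \<le>o aleph1"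
proof (rule ccontr)
  assume "\<not> |omega1 E| \<le>o aleph1"
  then have "aleph1 <o |omega1 E|"
    using not_ordLeq_iff_ordLess Card_order_aleph1 card_of_Card_order
    unfolding card_order_on_def by blast
  then have "|Field aleph1| \<le>o |omega1 E|"
    using ordIso_ordLess_trans[OF card_of_Field_ordIso[OF Card_order_aleph1]] ordLess_imp_ordLeq
    by blast
  then obtain j where j: "inj_on j (Field aleph1)" "j ` Field aleph1 \<subseteq> omega1 E"
    using card_of_ordLeq[of "Field aleph1" "omega1 E"] by blast
  define T where "T = j ` Field aleph1"
  have "uncountable T"
    using uncountable_Field_aleph1 countable_image_inj_on[OF _ j(1)] unfolding T_def by blast
  have T_le: "|T| \<le>o aleph1"
    unfolding T_def using card_of_image card_of_Field_aleph1_le by (rule ordLeq_transitive)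
  have ext_le: "|ext E x| \<le>o aleph1" if "x \<in> T" for x
  proof -
    have "x \<in> omega1 E" using that j(2) unfolding T_def by blast
    then show ?thesis unfolding omega1_def by (simp add: countable_imp_card_le_aleph1)
  qed
  define U where "U = T \<union> (\<Union>x\<in>T. ext E x)"
  have "|U| \<le>o aleph1"
    unfolding U_def using card_le_aleph1_Un[OF T_le card_le_aleph1_UN[OF T_le ext_le]] .
  then have "\<not> omega1 E \<subseteq> U"
    using \<open>\<not> |omega1 E| \<le>o aleph1\<close> card_le_aleph1_subset[of "omega1 E" U] by blast
  then obtain y where y: "y \<in> omega1 E" "y \<notin> U"
    by blast
  have "T \<subseteq> ext E y"
  proof
    fix x assume "x \<in> T"
    then have "is_Ord E x" "is_Ord E y"
      using j(2) y(1) unfolding T_def omega1_def by auto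
    then have "E x y \<or> x = y \<or> E y x"
      by (rule is_Ord_linear[OF is_H_omega2_wfP[OF H] is_H_omega2_inj_ext[OF H]])
    then show "x \<in> ext E y" using y(2) \<open>x \<in> T\<close> unfolding U_def ext_def by auto
  qed
  then show False
    using \<open>uncountable T\<close> y(1) countable_subset unfolding omega1_def by blast
qed

lemma elem_sub_extensional:
  assumes "inj (ext E)" and "elem_sub E W M" and "x \<in> M" "y \<in> M"
    and "\<forall>z\<in>M. E z x \<longleftrightarrow> E z y"
  shows "x = y"
proof (rule ccontr)
  assume "x \<noteq> y"
  define s where "s i = (if i = 0 then x else y)" for i :: nat
  \<comment> \<open>the formula \<open>\<exists>v2. \<not> (v2 \<in> v0 \<longleftrightarrow> v2 \<in> v1)\<close>\<close>
  define \<phi> where "\<phi> = FEx 2 (FNeg (FConj (FNeg (FConj (FMem 2 0) (FNeg (FMem 2 1))))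
                                       (FNeg (FConj (FMem 2 1) (FNeg (FMem 2 0))))))"
  have "ext E x \<noteq> ext E y" using \<open>inj (ext E)\<close> \<open>x \<noteq> y\<close> by (auto dest: injD)
  then obtain z where "\<not> (E z x \<longleftrightarrow> E z y)" unfolding ext_def by blast
  then have "sat UNIV E W \<phi> s" unfolding \<phi>_def s_def by auto
  moreover have "\<forall>i. s i \<in> M" using \<open>x \<in> M\<close> \<open>y \<in> M\<close> unfolding s_def by auto
  ultimately have "sat M E W \<phi> s" using \<open>elem_sub E W M\<close> unfolding elem_sub_def by blast
  then show False using assms(5) unfolding \<phi>_def s_def by auto
qed

lemma is_iso_unique:
  assumes wf: "wfP E" and "inj (ext E)" and N: "elem_sub E W N"
    and f: "is_iso E M N f" and g: "is_iso E M N g"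
  shows "x \<in> M \<Longrightarrow> f x = g x"
proof (induction x rule: wfp_induct_rule[OF wf])
  case (1 x)
  have transfer: "E z (f1 x) \<Longrightarrow> E z (f2 x)"
    if f1: "is_iso E M N f1" and f2: "is_iso E M N f2"
      and agree: "\<And>y. E y x \<Longrightarrow> y \<in> M \<Longrightarrow> f1 y = f2 y" and "z \<in> N"
    for f1 f2 z
  proof -
    assume "E z (f1 x)"
    obtain y where y: "y \<in> M" "z = f1 y"
      using f1 \<open>z \<in> N\<close> unfolding is_iso_def bij_betw_def by auto
    then have "E y x" using f1 \<open>E z (f1 x)\<close> \<open>x \<in> M\<close> unfolding is_iso_def by blast
    then show "E z (f2 x)" using f2 agree y \<open>x \<in> M\<close> unfolding is_iso_def by auto
  qed
  have "\<forall>z\<in>N. E z (f x) \<longleftrightarrow> E z (g x)"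
    using transfer[OF f g] transfer[OF g f] 1 by (metis (no_types))
  moreover have "f x \<in> N" "g x \<in> N"
    using f g \<open>x \<in> M\<close> unfolding is_iso_def bij_betw_def by auto
  ultimately show ?case using elem_sub_extensional[OF \<open>inj (ext E)\<close> N] by blast
qed

lemma phi_eq_is_iso:
  assumes "wfP E" and "inj (ext E)" and "elem_sub E W N"
    and f: "is_iso E M N f" and "x \<in> M"
  shows "phi E M N x = f x"
proof -
  define f' where "f' y = (if y \<in> M then f y else undefined)" for y
  have f': "is_iso E M N f' \<and> (\<forall>y. y \<notin> M \<longrightarrow> f' y = undefined)"
    using f unfolding is_iso_def f'_def bij_betw_def inj_on_def by auto
  have unique: "g = f'" if g: "is_iso E M N g \<and> (\<forall>y. y \<notin> M \<longrightarrow> g y = undefined)" for g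
  proof
    fix y show "g y = f' y"
      using g f' is_iso_unique[OF assms(1-3), of M g f' y] by (cases "y \<in> M") auto
  qed
  have "phi E M N = f'" unfolding phi_def using f' unique by (rule the_equality)
  then show ?thesis using \<open>x \<in> M\<close> unfolding f'_def by simp
qed

lemma is_iso_comp: "is_iso E M N f \<Longrightarrow> is_iso E N K g \<Longrightarrow> is_iso E M K (g \<circ> f)"
  unfolding is_iso_def bij_betw_def inj_on_def by auto

lemma isomorphic_trans: "isomorphic E M N \<Longrightarrow> isomorphic E N K \<Longrightarrow> isomorphic E M K"
  unfolding isomorphic_def using is_iso_comp by blast

section \<open>Amalgamation of conditions\<close>

definition cond_support :: "'h cond \<Rightarrow> 'h set" where
  "cond_support p = \<Union>(fst p) \<union> dom (snd p)"

definition cond_iso_over ::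
  "('h \<Rightarrow> 'h \<Rightarrow> bool) \<Rightarrow> 'h set \<Rightarrow> 'h cond \<Rightarrow> 'h cond \<Rightarrow> ('h \<Rightarrow> 'h) \<Rightarrow> bool" where
  "cond_iso_over E R p q \<psi> \<longleftrightarrow>
     bij_betw \<psi> (cond_support p) (cond_support q)
   \<and> (\<forall>x\<in>cond_support p. \<forall>y\<in>cond_support p. E (\<psi> x) (\<psi> y) \<longleftrightarrow> E x y)
   \<and> image \<psi> ` fst p = fst q
   \<and> (\<forall>x\<in>cond_support p. snd q (\<psi> x) = snd p x)
   \<and> (\<forall>x\<in>cond_support p. \<psi> x \<in> omega1 E \<longleftrightarrow> x \<in> omega1 E)
   \<and> (\<forall>x\<in>cond_support p. \<psi> x \<in> R \<longleftrightarrow> x \<in> R)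
   \<and> (\<forall>x\<in>cond_support p \<inter> R. \<psi> x = x)"

lemma PP_memD:
  assumes "p \<in> PP E W"
  shows "finite (fst p)" "fst p \<subseteq> SS E W"
    "\<And>M N. M \<in> fst p \<Longrightarrow> N \<in> fst p \<Longrightarrow> delta E M = delta E N \<Longrightarrow> isomorphic E M N"
    "\<And>M N'. M \<in> fst p \<Longrightarrow> N' \<in> fst p \<Longrightarrow> delta E M \<subset> delta E N' \<Longrightarrow>
       \<exists>N\<in>fst p. delta E N = delta E N' \<and> set_in E M N"
    "finite (dom (snd p))" "dom (snd p) \<subseteq> omega2 E"
    "\<And>M N \<alpha>. M \<in> fst p \<Longrightarrow> N \<in> fst p \<Longrightarrow> delta E M = delta E N \<Longrightarrow> \<alpha> \<in> dom (snd p) \<Longrightarrow>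
       \<alpha> \<in> M \<Longrightarrow> phi E M N \<alpha> \<in> dom (snd p) \<and> snd p (phi E M N \<alpha>) = snd p \<alpha>"
  using assms unfolding PP_def P_Min_def mem_Collect_eq case_prod_unfold by blast+

lemma countable_cond_support:
  assumes "p \<in> PP E W"
  shows "countable (cond_support p)"
proof -
  have "countable M" if "M \<in> fst p" for M
    using PP_memD(2)[OF assms] that unfolding SS_def by blast
  then have "countable (\<Union>M\<in>fst p. M)"
    using countable_finite[OF PP_memD(1)[OF assms]] by (intro countable_UN)
  then show ?thesis
    unfolding cond_support_def using countable_finite[OF PP_memD(5)[OF assms]] by simp
qed

lemma cond_iso_overD:
  assumes "cond_iso_over E R p q \<psi>"
  shows "bij_betw \<psi> (cond_support p) (cond_support q)"
    and "x \<in> cond_support p \<Longrightarrow> y \<in> cond_support p \<Longrightarrow> E (\<psi> x) (\<psi> y) \<longleftrightarrow> E x y"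
    and "M \<in> fst p \<Longrightarrow> \<psi> ` M \<in> fst q"
    and "x \<in> cond_support p \<Longrightarrow> snd q (\<psi> x) = snd p x"
    and "x \<in> cond_support p \<Longrightarrow> \<psi> x \<in> omega1 E \<longleftrightarrow> x \<in> omega1 E"
    and "x \<in> cond_support p \<Longrightarrow> \<psi> x \<in> R \<longleftrightarrow> x \<in> R"
    and "x \<in> cond_support p \<Longrightarrow> x \<in> R \<Longrightarrow> \<psi> x = x"
  using assms unfolding cond_iso_over_def by auto

lemma cond_iso_over_omega1_subset:
  assumes \<psi>: "cond_iso_over E R p q \<psi>" and "cond_support q \<inter> omega1 E \<subseteq> R"
  shows "cond_support p \<inter> omega1 E \<subseteq> R"
proof
  fix x assume x: "x \<in> cond_support p \<inter> omega1 E"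
  then have "\<psi> x \<in> cond_support q \<inter> omega1 E"
    using cond_iso_overD(1,5)[OF \<psi>] bij_betwE by blast
  then show "x \<in> R" using assms(2) cond_iso_overD(6)[OF \<psi>] x by blast
qed

lemma support_subset_of_mem: "M \<in> fst p \<Longrightarrow> M \<subseteq> cond_support p"
  unfolding cond_support_def by blast

lemma cond_iso_over_is_iso:
  assumes \<psi>: "cond_iso_over E R p q \<psi>" and "M \<in> fst p"
  shows "is_iso E M (\<psi> ` M) \<psi>"
proof -
  have M: "M \<subseteq> cond_support p" using support_subset_of_mem[OF \<open>M \<in> fst p\<close>] .
  then have "inj_on \<psi> M"
    using cond_iso_overD(1)[OF \<psi>] inj_on_subset unfolding bij_betw_def by blast
  moreover have "\<forall>x\<in>M. \<forall>y\<in>M. E x y \<longleftrightarrow> E (\<psi> x) (\<psi> y)"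
    using cond_iso_overD(2)[OF \<psi>] M by blast
  ultimately show ?thesis unfolding is_iso_def bij_betw_def by blast
qed

lemma cond_iso_over_delta:
  assumes \<psi>: "cond_iso_over E R p q \<psi>" and "cond_support p \<inter> omega1 E \<subseteq> R" and "M \<in> fst p"
  shows "delta E (\<psi> ` M) = delta E M"
proof -
  have M: "M \<subseteq> cond_support p" using support_subset_of_mem[OF \<open>M \<in> fst p\<close>] .
  have fixed: "\<psi> x = x" if "x \<in> M" "x \<in> omega1 E \<or> \<psi> x \<in> omega1 E" for x
  proof -
    have "x \<in> cond_support p" "x \<in> omega1 E" using that M cond_iso_overD(5)[OF \<psi>] by auto
    then show ?thesis using assms(2) cond_iso_overD(7)[OF \<psi>] by blast
  qed
  show ?thesis unfolding delta_def
  proof (intro set_eqI iffI)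
    fix y assume "y \<in> \<psi> ` M \<inter> omega1 E"
    then obtain x where "x \<in> M" "y = \<psi> x" "\<psi> x \<in> omega1 E" by blast
    then show "y \<in> M \<inter> omega1 E" using fixed[of x] by auto
  next
    fix y assume "y \<in> M \<inter> omega1 E"
    then show "y \<in> \<psi> ` M \<inter> omega1 E" using fixed[of y] by (auto intro: rev_image_eqI)
  qed
qed

context
  fixes E W R and p q :: "'h cond" and \<psi> \<chi> and f :: "'h \<rightharpoonup> bool"
  assumes H: "is_H_omega2 E"
    and p: "p \<in> PP E W" and q: "q \<in> PP E W"
    and \<psi>: "cond_iso_over E R p q \<psi>" and \<chi>: "cond_iso_over E R q p \<chi>"
    and common: "cond_support p \<inter> cond_support q \<subseteq> R"
    and omega1_p: "cond_support p \<inter> omega1 E \<subseteq> R"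
    and omega1_q: "cond_support q \<inter> omega1 E \<subseteq> R"
    and f_p: "snd p \<subseteq>\<^sub>m f" and f_q: "snd q \<subseteq>\<^sub>m f"
    and dom_f: "dom f \<subseteq> dom (snd p) \<union> dom (snd q)"
begin

lemma amalgam_dom:
  assumes "\<alpha> \<in> cond_support p" and "\<alpha> \<in> dom f"
  shows "\<alpha> \<in> dom (snd p)"
proof (rule ccontr)
  assume "\<alpha> \<notin> dom (snd p)"
  then have "\<alpha> \<in> dom (snd q)" using assms(2) dom_f by blast
  then have "\<alpha> \<in> R" using common assms(1) unfolding cond_support_def by blast
  then have "\<psi> \<alpha> = \<alpha>" using cond_iso_overD(7)[OF \<psi> assms(1)] by blast
  then have "snd q \<alpha> = snd p \<alpha>" using cond_iso_overD(4)[OF \<psi> assms(1)] by simp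
  then show False using \<open>\<alpha> \<notin> dom (snd p)\<close> \<open>\<alpha> \<in> dom (snd q)\<close> by (simp add: domIff)
qed

lemma amalgam_isomorphic:
  assumes M: "M \<in> fst p" and N: "N \<in> fst p \<union> fst q" and "delta E M = delta E N"
  shows "isomorphic E M N"
proof (cases "N \<in> fst p")
  case True
  then show ?thesis using PP_memD(3)[OF p M] assms(3) by blast
next
  case False
  then have "N \<in> fst q" using N by blast
  have "isomorphic E M (\<psi> ` M)"
    using cond_iso_over_is_iso[OF \<psi> M] unfolding isomorphic_def by blast
  moreover have "isomorphic E (\<psi> ` M) N"
    using PP_memD(3)[OF q cond_iso_overD(3)[OF \<psi> M] \<open>N \<in> fst q\<close>]
      cond_iso_over_delta[OF \<psi> omega1_p M] assms(3) by simp
  ultimately show ?thesis by (rule isomorphic_trans)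
qed

lemma amalgam_set_in:
  assumes M: "M \<in> fst p" and N': "N' \<in> fst p \<union> fst q" and "delta E M \<subset> delta E N'"
  shows "\<exists>N\<in>fst p \<union> fst q. delta E N = delta E N' \<and> set_in E M N"
proof (cases "N' \<in> fst p")
  case True
  then show ?thesis using PP_memD(4)[OF p M] assms(3) by blast
next
  case False
  then have "N' \<in> fst q" using N' by blast
  have "\<chi> ` N' \<in> fst p" "delta E (\<chi> ` N') = delta E N'"
    using cond_iso_overD(3)[OF \<chi>] cond_iso_over_delta[OF \<chi> omega1_q] \<open>N' \<in> fst q\<close>
    by auto
  then show ?thesis using PP_memD(4)[OF p M] assms(3) by fastforce
qed

lemma amalgam_phi:
  assumes M: "M \<in> fst p" and N: "N \<in> fst p \<union> fst q" and "delta E M = delta E N"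
    and "\<alpha> \<in> dom f" "\<alpha> \<in> M"
  shows "phi E M N \<alpha> \<in> dom f \<and> f (phi E M N \<alpha>) = f \<alpha>"
proof -
  have "\<alpha> \<in> cond_support p" using support_subset_of_mem[OF M] \<open>\<alpha> \<in> M\<close> by blast
  then have \<alpha>: "\<alpha> \<in> dom (snd p)" using amalgam_dom \<open>\<alpha> \<in> dom f\<close> by blast
  have f_p': "x \<in> dom (snd p) \<Longrightarrow> x \<in> dom f \<and> f x = snd p x" for x
    using map_le_implies_dom_le[OF f_p] f_p[unfolded map_le_def] by auto
  have f_q': "x \<in> dom (snd q) \<Longrightarrow> x \<in> dom f \<and> f x = snd q x" for x
    using map_le_implies_dom_le[OF f_q] f_q[unfolded map_le_def] by auto
  show ?thesis
  proof (cases "N \<in> fst p")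
    case True
    then show ?thesis using PP_memD(7)[OF p M True assms(3) \<alpha> \<open>\<alpha> \<in> M\<close>] f_p' \<alpha> by auto
  next
    case False
    then have "N \<in> fst q" using N by blast
    define M' where "M' = \<psi> ` M"
    have "M' \<in> fst q" "is_iso E M M' \<psi>"
      unfolding M'_def using cond_iso_overD(3)[OF \<psi> M] cond_iso_over_is_iso[OF \<psi> M] by auto
    have "delta E M' = delta E N"
      unfolding M'_def using cond_iso_over_delta[OF \<psi> omega1_p M] assms(3) by simp
    then obtain \<phi> where \<phi>: "is_iso E M' N \<phi>"
      using PP_memD(3)[OF q \<open>M' \<in> fst q\<close> \<open>N \<in> fst q\<close>] unfolding isomorphic_def by blast
    have wf: "wfP E" and ext: "inj (ext E)"
      using is_H_omega2_wfP[OF H] is_H_omega2_inj_ext[OF H] .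
    have N_el: "elem_sub E W N" using PP_memD(2)[OF q] \<open>N \<in> fst q\<close> unfolding SS_def by blast
    have "phi E M N \<alpha> = \<phi> (\<psi> \<alpha>)"
      using phi_eq_is_iso[OF wf ext N_el is_iso_comp[OF \<open>is_iso E M M' \<psi>\<close> \<phi>] \<open>\<alpha> \<in> M\<close>] by simp
    also have "\<dots> = phi E M' N (\<psi> \<alpha>)"
      using phi_eq_is_iso[OF wf ext N_el \<phi>] \<open>\<alpha> \<in> M\<close> unfolding M'_def by simp
    finally have phi_\<alpha>: "phi E M N \<alpha> = phi E M' N (\<psi> \<alpha>)" .
    have "snd q (\<psi> \<alpha>) = snd p \<alpha>"
      using cond_iso_overD(4)[OF \<psi> \<open>\<alpha> \<in> cond_support p\<close>] .
    then have "\<psi> \<alpha> \<in> dom (snd q)" using \<alpha> by (simp add: domIff)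
    moreover have "\<psi> \<alpha> \<in> M'" unfolding M'_def using \<open>\<alpha> \<in> M\<close> by blast
    ultimately have "phi E M' N (\<psi> \<alpha>) \<in> dom (snd q) \<and> snd q (phi E M' N (\<psi> \<alpha>)) = snd q (\<psi> \<alpha>)"
      using PP_memD(7)[OF q \<open>M' \<in> fst q\<close> \<open>N \<in> fst q\<close> \<open>delta E M' = delta E N\<close>] by blast
    then show ?thesis
      using phi_\<alpha> \<open>snd q (\<psi> \<alpha>) = snd p \<alpha>\<close> f_p' f_q' \<alpha> by auto
  qed
qed

end

lemma amalgam_in_PP:
  assumes H: "is_H_omega2 E" and p: "p \<in> PP E W" and q: "q \<in> PP E W"
    and \<psi>: "cond_iso_over E R p q \<psi>" and \<chi>: "cond_iso_over E R q p \<chi>"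
    and common: "cond_support p \<inter> cond_support q \<subseteq> R"
    and omega1_p: "cond_support p \<inter> omega1 E \<subseteq> R"
    and omega1_q: "cond_support q \<inter> omega1 E \<subseteq> R"
    and f_p: "snd p \<subseteq>\<^sub>m f" and f_q: "snd q \<subseteq>\<^sub>m f"
    and dom_f: "dom f \<subseteq> dom (snd p) \<union> dom (snd q)"
  shows "(fst p \<union> fst q, f) \<in> PP E W"
proof -
  note amalgam_pq = amalgam_isomorphic[OF H p q \<psi> \<chi> common omega1_p omega1_q f_p f_q dom_f]
    amalgam_set_in[OF H p q \<psi> \<chi> common omega1_p omega1_q f_p f_q dom_f]
    amalgam_phi[OF H p q \<psi> \<chi> common omega1_p omega1_q f_p f_q dom_f]
  have common': "cond_support q \<inter> cond_support p \<subseteq> R" using common by blast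
  have dom_f': "dom f \<subseteq> dom (snd q) \<union> dom (snd p)" using dom_f by blast
  note amalgam_qp = amalgam_isomorphic[OF H q p \<chi> \<psi> common' omega1_q omega1_p f_q f_p dom_f']
    amalgam_set_in[OF H q p \<chi> \<psi> common' omega1_q omega1_p f_q f_p dom_f']
    amalgam_phi[OF H q p \<chi> \<psi> common' omega1_q omega1_p f_q f_p dom_f']
  have union: "fst q \<union> fst p = fst p \<union> fst q" by blast
  have "fst p \<union> fst q \<in> P_Min E W"
    unfolding P_Min_def
  proof (intro CollectI conjI ballI impI)
    show "finite (fst p \<union> fst q)" using PP_memD(1)[OF p] PP_memD(1)[OF q] by blast
    show "fst p \<union> fst q \<subseteq> SS E W" using PP_memD(2)[OF p] PP_memD(2)[OF q] by blast
    fix M N assume "M \<in> fst p \<union> fst q" "N \<in> fst p \<union> fst q"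
    then show "delta E M = delta E N \<Longrightarrow> isomorphic E M N"
      and "delta E M \<subset> delta E N \<Longrightarrow> \<exists>N'\<in>fst p \<union> fst q. delta E N' = delta E N \<and> set_in E M N'"
      using amalgam_pq(1,2) amalgam_qp(1,2) unfolding union by blast+
  qed
  moreover have "finite (dom f)"
    using dom_f PP_memD(5)[OF p] PP_memD(5)[OF q] by (simp add: finite_subset)
  moreover have "dom f \<subseteq> omega2 E"
    using dom_f PP_memD(6)[OF p] PP_memD(6)[OF q] by blast
  moreover have "\<forall>M\<in>fst p \<union> fst q. \<forall>N\<in>fst p \<union> fst q. delta E M = delta E N \<longrightarrow>
      (\<forall>\<alpha>\<in>dom f \<inter> M. phi E M N \<alpha> \<in> dom f \<and> f (phi E M N \<alpha>) = f \<alpha>)"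
    using amalgam_pq(3) amalgam_qp(3) unfolding union by blast
  ultimately show ?thesis unfolding PP_def by blast
qed

lemma compatible_if_cond_iso_over:
  assumes H: "is_H_omega2 E" and p: "p \<in> PP E W" and q: "q \<in> PP E W"
    and \<psi>: "cond_iso_over E R p q \<psi>" and \<chi>: "cond_iso_over E R q p \<chi>"
    and common: "cond_support p \<inter> cond_support q \<subseteq> R"
    and omega1_p: "cond_support p \<inter> omega1 E \<subseteq> R"
    and omega1_q: "cond_support q \<inter> omega1 E \<subseteq> R"
  shows "compatible (PP E W) PP_le p q"
proof -
  define f where "f = snd p ++ snd q"
  have agree: "snd p x = snd q x" if "x \<in> dom (snd p)" "x \<in> dom (snd q)" for x
  proof -
    have "x \<in> cond_support p \<inter> R" using that common unfolding cond_support_def by blast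
    then have "\<psi> x = x" "snd q (\<psi> x) = snd p x"
      using cond_iso_overD(4,7)[OF \<psi>] by blast+
    then show ?thesis by simp
  qed
  have f_q: "snd q \<subseteq>\<^sub>m f" unfolding f_def by simp
  have f_p: "snd p \<subseteq>\<^sub>m f" unfolding f_def map_le_def
  proof
    fix x assume "x \<in> dom (snd p)"
    then show "snd p x = (snd p ++ snd q) x"
      using agree[of x] by (cases "x \<in> dom (snd q)") (auto simp: map_add_dom_app_simps)
  qed
  have "dom f \<subseteq> dom (snd p) \<union> dom (snd q)" unfolding f_def by auto
  then have "(fst p \<union> fst q, f) \<in> PP E W"
    by (rule amalgam_in_PP[OF H p q \<psi> \<chi> common omega1_p omega1_q f_p f_q])
  moreover have "PP_le (fst p \<union> fst q, f) p" "PP_le (fst p \<union> fst q, f) q"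
    unfolding PP_le_def using f_p f_q by auto
  ultimately show ?thesis unfolding compatible_def by blast
qed

section \<open>Types of conditions\<close>

text \<open>The type of p over R is the structure of p (membership, models, colouring, trace on R and
  on omega1) transported to the natural numbers along the enumeration to_nat_on of its support.\<close>

definition cond_type :: "('h \<Rightarrow> 'h \<Rightarrow> bool) \<Rightarrow> 'h set \<Rightarrow> 'h cond \<Rightarrow>
    nat set \<times> (nat \<times> nat) set \<times> nat set set \<times> (nat \<times> bool) set \<times> (nat \<times> nat) set \<times> nat set" where
  "cond_type E R p = (let X = cond_support p; g = to_nat_on X in
     (g ` X, map_prod g g ` {(x, y). x \<in> X \<and> y \<in> X \<and> E x y}, image g ` fst p,
      map_prod g id ` Map.graph (snd p), (\<lambda>x. (g x, to_nat_on R x)) ` (X \<inter> R),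
      g ` (X \<inter> omega1 E)))"

lemma image_eq_transport:
  assumes "inj_on k B" and "\<psi> ` A \<subseteq> B" and "C \<subseteq> B"
    and "\<And>a. a \<in> A \<Longrightarrow> k (\<psi> a) = g a" and "g ` A = k ` C"
  shows "\<psi> ` A = C"
proof -
  have "k ` \<psi> ` A = k ` C" using assms(4,5) by (simp add: image_image cong: image_cong)
  then show ?thesis using inj_on_image_eq_iff[OF assms(1-3)] by blast
qed

lemma transport_mem_iff:
  assumes k: "inj_on k B" and \<psi>: "inj_on \<psi> X" "\<psi> ` X \<subseteq> B" "\<And>x. x \<in> X \<Longrightarrow> k (\<psi> x) = g x"
    and "A \<subseteq> X" "C \<subseteq> B" "g ` A = k ` C" and "a \<in> X"
  shows "\<psi> a \<in> C \<longleftrightarrow> a \<in> A"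
proof -
  have "\<psi> ` A = C" using assms by (intro image_eq_transport[OF k]) auto
  then show ?thesis using inj_on_image_mem_iff[OF \<psi>(1) \<open>a \<in> X\<close> \<open>A \<subseteq> X\<close>] by simp
qed

lemma map_eq_iff_Some: "(\<And>b. m x = Some b \<longleftrightarrow> m' y = Some b) \<Longrightarrow> m x = m' y"
  by (cases "m x"; cases "m' y") auto

lemma to_nat_on_transport:
  assumes "countable X" "countable Y" and "to_nat_on X ` X = to_nat_on Y ` Y"
  shows "bij_betw (inv_into Y (to_nat_on Y) \<circ> to_nat_on X) X Y"
    and "x \<in> X \<Longrightarrow> to_nat_on Y ((inv_into Y (to_nat_on Y) \<circ> to_nat_on X) x) = to_nat_on X x"
proof -
  have "bij_betw (to_nat_on X) X (to_nat_on Y ` Y)"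
    using inj_on_imp_bij_betw[OF inj_on_to_nat_on[OF assms(1)]] assms(3) by simp
  then show "bij_betw (inv_into Y (to_nat_on Y) \<circ> to_nat_on X) X Y"
    using bij_betw_inv_into[OF inj_on_imp_bij_betw[OF inj_on_to_nat_on[OF assms(2)]]]
    by (rule bij_betw_trans)
  assume "x \<in> X"
  then have "to_nat_on X x \<in> to_nat_on Y ` Y" using assms(3) by blast
  then show "to_nat_on Y ((inv_into Y (to_nat_on Y) \<circ> to_nat_on X) x) = to_nat_on X x"
    by (simp add: f_inv_into_f)
qed

lemma transport_fixes_labelled:
  assumes "inj_on k Y" "inj_on h R" and \<psi>: "bij_betw \<psi> X Y" "\<And>x. x \<in> X \<Longrightarrow> k (\<psi> x) = g x"
    and labels: "(\<lambda>x. (g x, h x)) ` (X \<inter> R) = (\<lambda>y. (k y, h y)) ` (Y \<inter> R)"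
    and "x \<in> X"
  shows "\<psi> x \<in> R \<longleftrightarrow> x \<in> R" and "x \<in> R \<Longrightarrow> \<psi> x = x"
proof -
  have diag: "(\<lambda>x. (\<psi> x, x)) ` (X \<inter> R) = (\<lambda>y. (y, y)) ` (Y \<inter> R)"
  proof (rule image_eq_transport[OF map_prod_inj_on[OF assms(1,2)]])
    show "(\<lambda>x. (g x, h x)) ` (X \<inter> R) = map_prod k h ` (\<lambda>y. (y, y)) ` (Y \<inter> R)"
      using labels by (simp add: image_image)
  qed (use \<psi> in \<open>auto simp: bij_betw_def\<close>)
  show fixed: "\<psi> x = x" if "x \<in> R"
  proof -
    have "(\<psi> x, x) \<in> (\<lambda>y. (y, y)) ` (Y \<inter> R)" using diag \<open>x \<in> X\<close> that by blast
    then show ?thesis by auto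
  qed
  show "\<psi> x \<in> R \<longleftrightarrow> x \<in> R"
  proof
    assume "\<psi> x \<in> R"
    moreover have "\<psi> x \<in> Y" using \<psi>(1) \<open>x \<in> X\<close> bij_betwE by blast
    ultimately have "(\<psi> x, \<psi> x) \<in> (\<lambda>x. (\<psi> x, x)) ` (X \<inter> R)" using diag by blast
    then obtain a where a: "a \<in> X \<inter> R" "\<psi> a = \<psi> x" "a = \<psi> x" by auto
    then have "a = x" using \<psi>(1) \<open>x \<in> X\<close> unfolding bij_betw_def by (auto dest: inj_onD)
    then show "x \<in> R" using a(1) by blast
  qed (use fixed in simp)
qed

lemma cond_type_eq_imp_cond_iso_over:
  assumes X: "countable (cond_support p)" and Y: "countable (cond_support q)"
    and "countable R" and type: "cond_type E R p = cond_type E R q"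
  obtains \<psi> where "cond_iso_over E R p q \<psi>"
proof -
  define X Y where "X = cond_support p" and "Y = cond_support q"
  define g k h where "g = to_nat_on X" and "k = to_nat_on Y" and "h = to_nat_on R"
  have k: "inj_on k Y" and h: "inj_on h R"
    unfolding k_def h_def Y_def using Y \<open>countable R\<close> by (auto intro: inj_on_to_nat_on)
  have T1: "g ` X = k ` Y"
    and T2: "map_prod g g ` {(x, y). x \<in> X \<and> y \<in> X \<and> E x y}
      = map_prod k k ` {(x, y). x \<in> Y \<and> y \<in> Y \<and> E x y}"
    and T3: "image g ` fst p = image k ` fst q"
    and T4: "map_prod g id ` Map.graph (snd p) = map_prod k id ` Map.graph (snd q)"
    and T5: "(\<lambda>x. (g x, h x)) ` (X \<inter> R) = (\<lambda>x. (k x, h x)) ` (Y \<inter> R)"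
    and T6: "g ` (X \<inter> omega1 E) = k ` (Y \<inter> omega1 E)"
    using type unfolding cond_type_def Let_def g_def k_def h_def X_def Y_def by simp_all
  define \<psi> where "\<psi> = inv_into Y k \<circ> g"
  have bij: "bij_betw \<psi> X Y" and k\<psi>: "\<And>x. x \<in> X \<Longrightarrow> k (\<psi> x) = g x"
    using to_nat_on_transport[OF X[folded X_def] Y[folded Y_def] T1[unfolded g_def k_def]]
    unfolding \<psi>_def g_def k_def by auto
  then have \<psi>X: "\<psi> ` X = Y" and \<psi>: "inj_on \<psi> X" unfolding bij_betw_def by auto
  have graph_p: "Map.graph (snd p) \<subseteq> X \<times> UNIV" and graph_q: "Map.graph (snd q) \<subseteq> Y \<times> UNIV"
    unfolding X_def Y_def cond_support_def by (auto dest: graph_domD)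
  have "E (\<psi> x) (\<psi> y) \<longleftrightarrow> E x y" if "x \<in> X" "y \<in> X" for x y
  proof -
    have "map_prod \<psi> \<psi> (x, y) \<in> {(x, y). x \<in> Y \<and> y \<in> Y \<and> E x y}
        \<longleftrightarrow> (x, y) \<in> {(x, y). x \<in> X \<and> y \<in> X \<and> E x y}"
      using that \<psi>X k\<psi>
      by (intro transport_mem_iff[OF map_prod_inj_on[OF k k] map_prod_inj_on[OF \<psi> \<psi>] _ _ _ _ T2])
        auto
    then show ?thesis using that \<psi>X by auto
  qed
  moreover have "image \<psi> ` fst p = fst q"
  proof (rule image_eq_transport[OF inj_on_image_Pow[OF k]])
    have M_X: "M \<subseteq> X" if "M \<in> fst p" for M using that unfolding X_def cond_support_def by blast
    show "image \<psi> ` fst p \<subseteq> Pow Y" using M_X \<psi>X by blast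
    show "fst q \<subseteq> Pow Y" unfolding Y_def cond_support_def by blast
    show "k ` \<psi> ` M = g ` M" if "M \<in> fst p" for M
      unfolding image_image using M_X[OF that] k\<psi> by (intro image_cong) auto
  qed (rule T3)
  moreover have "snd q (\<psi> x) = snd p x" if "x \<in> X" for x
  proof (rule map_eq_iff_Some)
    fix b
    have "map_prod \<psi> id (x, b) \<in> Map.graph (snd q) \<longleftrightarrow> (x, b) \<in> Map.graph (snd p)"
      using that \<psi>X k\<psi>
      by (intro transport_mem_iff[OF map_prod_inj_on[OF k inj_on_id[of UNIV]]
            map_prod_inj_on[OF \<psi> inj_on_id[of UNIV]] _ _ graph_p graph_q T4]) auto
    then show "snd q (\<psi> x) = Some b \<longleftrightarrow> snd p x = Some b" by (simp add: Map.graph_def)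
  qed
  moreover have "\<psi> x \<in> omega1 E \<longleftrightarrow> x \<in> omega1 E" if "x \<in> X" for x
    using transport_mem_iff[OF k \<psi> _ k\<psi> _ _ T6 that] that \<psi>X by auto
  ultimately have "cond_iso_over E R p q \<psi>"
    unfolding cond_iso_over_def X_def[symmetric] Y_def[symmetric]
    using bij transport_fixes_labelled[OF k h bij k\<psi> T5] by simp
  then show thesis by (rule that)
qed

lemma CH_card_cond_types_le_aleph1:
  assumes "CH"
  shows "|cond_type E R ` {p. finite (fst p)}| \<le>o aleph1"
proof -
  have "cond_type E R ` {p. finite (fst p)} \<subseteq>
      UNIV \<times> UNIV \<times> {F. F \<subseteq> UNIV \<and> countable F} \<times> UNIV \<times> UNIV \<times> UNIV"
    unfolding cond_type_def Let_def by (auto intro: countable_finite)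
  moreover have F_le: "|{F :: nat set set. F \<subseteq> UNIV \<and> countable F}| \<le>o aleph1"
    using CH_card_of_countable_subsets_le_aleph1[OF assms CH_card_of_Pow_countable_le_aleph1[OF assms]] .
  moreover have "|(UNIV :: nat set set) \<times> (UNIV :: (nat \<times> nat) set set) \<times> {F :: nat set set. F \<subseteq> UNIV \<and> countable F}
      \<times> (UNIV :: (nat \<times> bool) set set) \<times> (UNIV :: (nat \<times> nat) set set) \<times> (UNIV :: nat set set)|
      \<le>o aleph1"
    by (intro card_le_aleph1_Times CH_card_of_Pow_countable_le_aleph1[OF assms] F_le)
  ultimately show ?thesis by (blast intro: card_le_aleph1_subset)
qed

lemma inj_graph: "inj Map.graph"
proof (rule injI)
  fix m m' :: "'a \<rightharpoonup> 'b" assume "Map.graph m = Map.graph m'"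
  then show "m = m'" by (intro ext map_eq_iff_Some) (simp add: Map.graph_def set_eq_iff)
qed

lemma CH_card_conds_within_le_aleph1:
  assumes "CH" and "|Z| \<le>o aleph1"
  shows "|{p :: 'h cond. countable (fst p) \<and> (\<forall>M\<in>fst p. countable M) \<and> countable (dom (snd p))
            \<and> cond_support p \<subseteq> Z}| \<le>o aleph1" (is "|?C| \<le>o _")
proof -
  define models where "models = {F. F \<subseteq> {M. M \<subseteq> Z \<and> countable M} \<and> countable F}"
  define graphs where "graphs = {G. G \<subseteq> Z \<times> (UNIV :: bool set) \<and> countable G}"
  have "|{M. M \<subseteq> Z \<and> countable M}| \<le>o aleph1"
    by (rule CH_card_of_countable_subsets_le_aleph1[OF assms])
  then have "|models| \<le>o aleph1"
    unfolding models_def by (rule CH_card_of_countable_subsets_le_aleph1[OF assms(1)])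
  moreover have "|Z \<times> (UNIV :: bool set)| \<le>o aleph1"
    using card_le_aleph1_Times[OF assms(2) countable_imp_card_le_aleph1[of "UNIV :: bool set"]]
    by simp
  then have "|graphs| \<le>o aleph1"
    unfolding graphs_def by (rule CH_card_of_countable_subsets_le_aleph1[OF assms(1)])
  moreover have inj: "inj_on (map_prod id Map.graph) ?C"
    using map_prod_inj_on[OF inj_on_id[of UNIV] inj_graph] by (rule inj_on_subset) simp
  moreover have into: "map_prod id Map.graph ` ?C \<subseteq> models \<times> graphs"
  proof
    fix t assume "t \<in> map_prod id Map.graph ` ?C"
    then obtain p where p: "p \<in> ?C" and t: "t = (fst p, Map.graph (snd p))"
      by (auto simp: map_prod_def split_beta)
    have "Map.graph (snd p) = (\<lambda>x. (x, the (snd p x))) ` dom (snd p)"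
      by (rule graph_eq_to_snd_dom)
    then show "t \<in> models \<times> graphs"
      using p unfolding t models_def graphs_def cond_support_def by auto
  qed
  then have "|?C| \<le>o |models \<times> graphs|"
    using card_of_ordLeq[of ?C "models \<times> graphs"] inj by blast
  ultimately show ?thesis using card_le_aleph1_Times ordLeq_transitive by blast
qed

lemma compatible_if_same_cond_type:
  assumes H: "is_H_omega2 E" and p: "p \<in> PP E W" and q: "q \<in> PP E W"
    and "countable R" and type: "cond_type E R p = cond_type E R q"
    and common: "cond_support p \<inter> cond_support q \<subseteq> R"
    and omega1_q: "cond_support q \<inter> omega1 E \<subseteq> R"
  shows "compatible (PP E W) PP_le p q"
proof -
  note countable = countable_cond_support[OF p] countable_cond_support[OF q] \<open>countable R\<close>
  obtain \<psi> where \<psi>: "cond_iso_over E R p q \<psi>"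
    using cond_type_eq_imp_cond_iso_over[OF countable type] .
  obtain \<chi> where \<chi>: "cond_iso_over E R q p \<chi>"
    using cond_type_eq_imp_cond_iso_over[OF countable(2,1,3) type[symmetric]] .
  show ?thesis
    using compatible_if_cond_iso_over[OF H p q \<psi> \<chi> common
        cond_iso_over_omega1_subset[OF \<psi> omega1_q] omega1_q] .
qed

lemma CH_type_closed_set:
  assumes H: "is_H_omega2 E" and "CH" and A: "A \<subseteq> PP E W"
  obtains Z where "omega1 E \<subseteq> Z" "|Z| \<le>o aleph1"
    and "\<And>R p. countable R \<Longrightarrow> R \<subseteq> Z \<Longrightarrow> p \<in> A \<Longrightarrow>
           \<exists>q\<in>A. cond_type E R q = cond_type E R p \<and> cond_support q \<subseteq> Z"
proof -
  define witness where "witness R t = (SOME q. q \<in> A \<and> cond_type E R q = t)" for R t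
  define F where "F R = (\<Union>t\<in>cond_type E R ` A. cond_support (witness R t))" for R
  have witness: "witness R (cond_type E R p) \<in> A \<and>
      cond_type E R (witness R (cond_type E R p)) = cond_type E R p" if "p \<in> A" for R p
    unfolding witness_def
    using someI[of "\<lambda>q. q \<in> A \<and> cond_type E R q = cond_type E R p" p] that by simp
  have F_le: "|F R| \<le>o aleph1" if "countable R" for R
    unfolding F_def
  proof (rule card_le_aleph1_UN)
    have "A \<subseteq> {p. finite (fst p)}" using A PP_memD(1) by blast
    then have "cond_type E R ` A \<subseteq> cond_type E R ` {p. finite (fst p)}" by (rule image_mono)
    then show "|cond_type E R ` A| \<le>o aleph1"
      by (rule card_le_aleph1_subset[OF _ CH_card_cond_types_le_aleph1[OF \<open>CH\<close>]])
    show "|cond_support (witness R t)| \<le>o aleph1" if "t \<in> cond_type E R ` A" for t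
    proof -
      obtain p where "p \<in> A" "t = cond_type E R p" using \<open>t \<in> cond_type E R ` A\<close> by blast
      then have "witness R t \<in> PP E W" using witness A by blast
      then show ?thesis by (intro countable_imp_card_le_aleph1 countable_cond_support)
    qed
  qed
  show thesis
  proof (rule CH_closure_card_le_aleph1[OF \<open>CH\<close> card_omega1_le_aleph1[OF H] F_le])
    fix Z assume Z: "omega1 E \<subseteq> Z" "|Z| \<le>o aleph1"
      and closed: "\<And>R. countable R \<Longrightarrow> R \<subseteq> Z \<Longrightarrow> F R \<subseteq> Z"
    show thesis
    proof (rule that[OF Z])
      fix R p assume "countable R" "R \<subseteq> Z" "p \<in> A"
      have "cond_support (witness R (cond_type E R p)) \<subseteq> F R"
        unfolding F_def using \<open>p \<in> A\<close> by (intro UN_upper imageI)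
      also have "F R \<subseteq> Z" using closed \<open>countable R\<close> \<open>R \<subseteq> Z\<close> .
      finally show "\<exists>q\<in>A. cond_type E R q = cond_type E R p \<and> cond_support q \<subseteq> Z"
        using witness[OF \<open>p \<in> A\<close>] by blast
    qed
  qed
qed

lemma antichain_cond_support_subset:
  assumes H: "is_H_omega2 E" and antichain: "antichain (PP E W) PP_le A"
    and "omega1 E \<subseteq> Z"
    and closed: "\<And>R p. countable R \<Longrightarrow> R \<subseteq> Z \<Longrightarrow> p \<in> A \<Longrightarrow>
           \<exists>q\<in>A. cond_type E R q = cond_type E R p \<and> cond_support q \<subseteq> Z"
    and p: "p \<in> A"
  shows "cond_support p \<subseteq> Z"
proof (rule ccontr)
  assume outside: "\<not> cond_support p \<subseteq> Z"
  have A: "A \<subseteq> PP E W" using antichain unfolding antichain_def by blast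
  define R where "R = cond_support p \<inter> Z"
  have "countable R" unfolding R_def using countable_cond_support A p by blast
  then obtain q where q: "q \<in> A" "cond_type E R q = cond_type E R p" "cond_support q \<subseteq> Z"
    using closed[OF _ _ p] unfolding R_def by blast
  have "compatible (PP E W) PP_le q p"
    using compatible_if_same_cond_type[OF H _ _ \<open>countable R\<close> q(2)] q(1,3) p A \<open>omega1 E \<subseteq> Z\<close>
    unfolding R_def by blast
  moreover have "q \<noteq> p" using q(3) outside by blast
  ultimately show False using antichain q(1) p unfolding antichain_def by blast
qed

theorem lemma3p7:
  fixes E :: "'h \<Rightarrow> 'h \<Rightarrow> bool" and W :: "('h \<times> 'h) set"
  assumes "is_H_omega2 E"
    and "well_order W"
    and "CH"
  shows "aleph2_cc (PP E W) PP_le"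
  unfolding aleph2_cc_def at_most_aleph1_def
proof (intro allI impI)
  \<comment> \<open>the well-ordering W only shapes the class SS E W of models; the argument never uses it\<close>
  fix A assume antichain: "antichain (PP E W) PP_le A"
  then have A: "A \<subseteq> PP E W" unfolding antichain_def by blast
  obtain Z where Z: "omega1 E \<subseteq> Z" "|Z| \<le>o aleph1"
    and closed: "\<And>R p. countable R \<Longrightarrow> R \<subseteq> Z \<Longrightarrow> p \<in> A \<Longrightarrow>
           \<exists>q\<in>A. cond_type E R q = cond_type E R p \<and> cond_support q \<subseteq> Z"
    using CH_type_closed_set[OF assms(1,3) A] by blast
  have "countable (fst p) \<and> (\<forall>M\<in>fst p. countable M) \<and> countable (dom (snd p))
      \<and> cond_support p \<subseteq> Z" if "p \<in> A" for p
    using PP_memD(1,2,5)[OF subsetD[OF A that]]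
      antichain_cond_support_subset[OF assms(1) antichain Z(1) closed that]
    unfolding SS_def by (auto intro: countable_finite)
  then have "A \<subseteq> {p. countable (fst p) \<and> (\<forall>M\<in>fst p. countable M) \<and> countable (dom (snd p))
      \<and> cond_support p \<subseteq> Z}"
    by blast
  then show "|A| \<le>o aleph1"
    using CH_card_conds_within_le_aleph1[OF assms(3) Z(2)] by (rule card_le_aleph1_subset)
qed

end
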